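(* Let $\mathcal{A}=\{A_1,\dots,A_m\}$ be a bimodal collection of pairwise disjoint subsets of a finite abelian group $G$. Suppose that for some $i$ the set $A_i$ is a coset of its internal difference group $H_i$. Let $A_i^1,\dots,A_i^r$ be pairwise disjoint subsets whose union is $A_i$, with internal difference groups $H_i^1,\dots,H_i^r$ respectively, such that for each $j=1,\dots,r$ the set $A_i^j$ is a coset of $H_i^j$. Then the collection $\{A_1,\dots,A_{i-1},A_i^1,\dots,A_i^r,A_{i+1},\dots,A_m\}$ has the bimodal property.
   Context: $G$ is a finite abelian group written additively. The internal difference group of a subset $S\subseteq G$ is the subgroup of $G$ generated by all elements $x-y$ with $x,y\in S$. A collection $\{A_1,\dots,A_m\}$ of pairwise disjoint subsets of $G$ is bimodal (has the bimodal property) if for every $i$ and every $\delta\in G\setminus\{0\}$, the number $N_i(\delta)$ of pairs $(a,b)$ with $a\in A_i$, $b\in A_j$ for some $j\neq i$, and $a-b=\delta$, satisfies $N_i(\delta)\in\{0,|A_i|\}$. *)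

theory Defs
  imports Main
begin

definition is_subgroup :: "'a::ab_group_add set \<Rightarrow> bool" where
  "is_subgroup H \<longleftrightarrow> 0 \<in> H \<and> (\<forall>x\<in>H. \<forall>y\<in>H. x + y \<in> H) \<and> (\<forall>x\<in>H. - x \<in> H)"

definition diff_group :: "'a::ab_group_add set \<Rightarrow> 'a set" where
  "diff_group S = \<Inter> {H. is_subgroup H \<and> {x - y | x y. x \<in> S \<and> y \<in> S} \<subseteq> H}"

definition is_coset_of :: "'a::ab_group_add set \<Rightarrow> 'a set \<Rightarrow> bool" where
  "is_coset_of A H \<longleftrightarrow> (\<exists>a. A = (\<lambda>h. a + h) ` H)"

definition Ncount :: "'i set \<Rightarrow> ('i \<Rightarrow> 'a::ab_group_add set) \<Rightarrow> 'i \<Rightarrow> 'a \<Rightarrow> nat" where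
  "Ncount I A i \<delta> = card {(a, b). a \<in> A i \<and> (\<exists>j\<in>I. j \<noteq> i \<and> b \<in> A j) \<and> a - b = \<delta>}"

definition bimodal :: "'i set \<Rightarrow> ('i \<Rightarrow> 'a::ab_group_add set) \<Rightarrow> bool" where
  "bimodal I A \<longleftrightarrow> (\<forall>i\<in>I. \<forall>j\<in>I. i \<noteq> j \<longrightarrow> A i \<inter> A j = {}) \<and>
     (\<forall>i\<in>I. \<forall>\<delta>. \<delta> \<noteq> 0 \<longrightarrow> Ncount I A i \<delta> = 0 \<or> Ncount I A i \<delta> = card (A i))"

end

theory Submission
  imports Defs "HOL-Library.Disjoint_Sets"
begin

text \<open>
For a coset C of its own difference group H and c \<in> C, c - \<delta> \<in> C iff \<delta> \<in> H.
Let B be a piece of the refined block A i. If \<delta> lies in the difference group of A i, then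
c - \<delta> stays in A i for every c \<in> B, so it lies in another block iff it leaves B; this happens
for all c \<in> B or for none, according as \<delta> is outside or inside the difference group of B.
Otherwise every such c - \<delta> leaves A i, the partners of B are those of A i restricted to B, and
bimodality of the old collection applies. The partners of the untouched blocks do not change.
\<close>

definition hit_set :: "'i set \<Rightarrow> ('i \<Rightarrow> 'a::ab_group_add set) \<Rightarrow> 'i \<Rightarrow> 'a \<Rightarrow> 'a set" where
  "hit_set I A k \<delta> = {a \<in> A k. a - \<delta> \<in> (\<Union>l\<in>I - {k}. A l)}"

lemma Ncount_eq_card_hit_set: "Ncount I A k \<delta> = card (hit_set I A k \<delta>)"
proof -
  have "{(a, b). a \<in> A k \<and> (\<exists>j\<in>I. j \<noteq> k \<and> b \<in> A j) \<and> a - b = \<delta>}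
        = (\<lambda>a. (a, a - \<delta>)) ` hit_set I A k \<delta>"
    by (auto simp: hit_set_def image_iff algebra_simps)
  then show ?thesis
    unfolding Ncount_def by (simp add: card_image inj_on_def)
qed

lemma card_subset_eq_0_or_card_iff:
  assumes "finite X" and "S \<subseteq> X"
  shows "card S = 0 \<or> card S = card X \<longleftrightarrow> S = {} \<or> S = X"
proof -
  have "finite S" using assms finite_subset by blast
  then show ?thesis using assms card_subset_eq by auto
qed

lemma bimodal_iff_hit_set:
  assumes "\<forall>k\<in>I. finite (A k)"
  shows "bimodal I A \<longleftrightarrow> disjoint_family_on A I \<and>
    (\<forall>k\<in>I. \<forall>\<delta>. \<delta> \<noteq> 0 \<longrightarrow> hit_set I A k \<delta> = {} \<or> hit_set I A k \<delta> = A k)"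
proof -
  have "card (hit_set I A k \<delta>) = 0 \<or> card (hit_set I A k \<delta>) = card (A k) \<longleftrightarrow>
        hit_set I A k \<delta> = {} \<or> hit_set I A k \<delta> = A k" if "k \<in> I" for k \<delta>
    using assms that by (intro card_subset_eq_0_or_card_iff) (auto simp: hit_set_def)
  then show ?thesis
    unfolding bimodal_def disjoint_family_on_def Ncount_eq_card_hit_set by (intro iffI conjI) metis+
qed

lemma is_subgroup_diff_group: "is_subgroup (diff_group S)"
  unfolding diff_group_def is_subgroup_def by auto

lemma diff_mem_diff_group: "x \<in> S \<Longrightarrow> y \<in> S \<Longrightarrow> x - y \<in> diff_group S"
  unfolding diff_group_def by blast

lemma coset_diff_group_minus_mem_iff:
  assumes "is_coset_of C (diff_group C)" and "c \<in> C"
  shows "c - \<delta> \<in> C \<longleftrightarrow> \<delta> \<in> diff_group C"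
proof
  assume "c - \<delta> \<in> C"
  then show "\<delta> \<in> diff_group C"
    using diff_mem_diff_group[OF \<open>c \<in> C\<close>] by fastforce
next
  assume \<delta>: "\<delta> \<in> diff_group C"
  obtain x where C: "C = (\<lambda>h. x + h) ` diff_group C"
    using assms(1) unfolding is_coset_of_def by blast
  then obtain h where h: "h \<in> diff_group C" "c = x + h"
    using \<open>c \<in> C\<close> by blast
  have "h + - \<delta> \<in> diff_group C"
    using is_subgroup_diff_group h(1) \<delta> unfolding is_subgroup_def by blast
  moreover have "c - \<delta> = x + (h + - \<delta>)"
    using h(2) by (simp add: algebra_simps)
  ultimately show "c - \<delta> \<in> C"
    using C by blast
qed

lemma Plus_Diff_Inl: "(I <+> J) - {Inl k} = (I - {k}) <+> J"
  by auto

lemma Plus_Diff_Inr: "(I <+> J) - {Inr j} = I <+> (J - {j})"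
  by auto

lemma UN_Plus_case_sum: "(\<Union>x\<in>I <+> J. case_sum A B x) = (\<Union>i\<in>I. A i) \<union> (\<Union>j\<in>J. B j)"
  by auto

lemma disjoint_family_on_case_sum:
  assumes "disjoint_family_on A I" and "disjoint_family_on B J"
    and "\<And>i j. i \<in> I \<Longrightarrow> j \<in> J \<Longrightarrow> A i \<inter> B j = {}"
  shows "disjoint_family_on (case_sum A B) (I <+> J)"
proof (unfold disjoint_family_on_def, intro ballI impI)
  fix x y assume "x \<in> I <+> J" "y \<in> I <+> J" "x \<noteq> y"
  then show "case_sum A B x \<inter> case_sum A B y = {}"
    using assms by (elim PlusE) (fastforce dest: disjoint_family_onD)+
qed

context
  fixes I :: "'i set" and A :: "'i \<Rightarrow> 'a::ab_group_add set" and i :: 'i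
    and J :: "'j set" and B :: "'j \<Rightarrow> 'a set"
  assumes disjoint_A: "disjoint_family_on A I" and i: "i \<in> I"
    and disjoint_B: "disjoint_family_on B J" and cover: "(\<Union>j\<in>J. B j) = A i"
begin

lemma disjoint_family_on_refined: "disjoint_family_on (case_sum A B) ((I - {i}) <+> J)"
proof (rule disjoint_family_on_case_sum)
  show "disjoint_family_on A (I - {i})"
    using disjoint_A by (rule disjoint_family_on_mono[rotated]) blast
  show "A k \<inter> B j = {}" if "k \<in> I - {i}" "j \<in> J" for k j
    using disjoint_family_onD[OF disjoint_A i, of k] that cover by blast
qed (rule disjoint_B)

lemma hit_set_refined_Inl:
  assumes "k \<in> I - {i}"
  shows "hit_set ((I - {i}) <+> J) (case_sum A B) (Inl k) \<delta> = hit_set I A k \<delta>"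
proof -
  have "(\<Union>l\<in>((I - {i}) <+> J) - {Inl k}. case_sum A B l) = (\<Union>l\<in>I - {i} - {k}. A l) \<union> A i"
    by (simp only: Plus_Diff_Inl UN_Plus_case_sum cover)
  also have "\<dots> = (\<Union>l\<in>I - {k}. A l)"
    using assms i by blast
  finally show ?thesis
    by (simp add: hit_set_def)
qed

lemma hit_set_refined_Inr:
  assumes "j \<in> J"
  shows "hit_set ((I - {i}) <+> J) (case_sum A B) (Inr j) \<delta> =
    {a \<in> B j. a - \<delta> \<in> (\<Union>l\<in>I - {i}. A l) \<union> (A i - B j)}"
proof -
  have "(\<Union>l\<in>((I - {i}) <+> J) - {Inr j}. case_sum A B l) =
      (\<Union>l\<in>I - {i}. A l) \<union> (\<Union>j'\<in>J - {j}. B j')"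
    by (simp only: Plus_Diff_Inr UN_Plus_case_sum)
  also have "(\<Union>j'\<in>J - {j}. B j') = A i - B j"
    using assms disjoint_B cover unfolding disjoint_family_on_def by blast
  finally show ?thesis
    by (simp add: hit_set_def)
qed

lemma hit_set_refined_Inr_mem_diff_group:
  assumes "j \<in> J" and "is_coset_of (A i) (diff_group (A i))" and "\<delta> \<in> diff_group (A i)"
  shows "hit_set ((I - {i}) <+> J) (case_sum A B) (Inr j) \<delta> = {a \<in> B j. a - \<delta> \<notin> B j}"
proof -
  have "a - \<delta> \<in> (\<Union>l\<in>I - {i}. A l) \<union> (A i - B j) \<longleftrightarrow> a - \<delta> \<notin> B j" if "a \<in> B j" for a
  proof -
    have "a - \<delta> \<in> A i"
      using coset_diff_group_minus_mem_iff[OF assms(2)] assms(1,3) that cover by blast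
    moreover have "A i \<inter> (\<Union>l\<in>I - {i}. A l) = {}"
      using disjoint_family_onD[OF disjoint_A i] by blast
    ultimately show ?thesis
      by blast
  qed
  then show ?thesis
    unfolding hit_set_refined_Inr[OF assms(1)] by auto
qed

lemma hit_set_refined_Inr_not_mem_diff_group:
  assumes "j \<in> J" and "\<delta> \<notin> diff_group (A i)"
  shows "hit_set ((I - {i}) <+> J) (case_sum A B) (Inr j) \<delta> = B j \<inter> hit_set I A i \<delta>"
proof -
  have "B j \<subseteq> A i"
    using assms(1) cover by blast
  have "a - \<delta> \<notin> A i" if "a \<in> B j" for a
    using diff_mem_diff_group[of a "A i" "a - \<delta>"] assms(2) that \<open>B j \<subseteq> A i\<close> by auto
  then show ?thesis
    unfolding hit_set_refined_Inr[OF assms(1)] using \<open>B j \<subseteq> A i\<close> by (auto simp: hit_set_def[of I A i])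
qed

lemma hit_set_refined_Inr_empty_or_all:
  assumes "j \<in> J"
    and "is_coset_of (A i) (diff_group (A i))" and "is_coset_of (B j) (diff_group (B j))"
    and "hit_set I A i \<delta> = {} \<or> hit_set I A i \<delta> = A i"
  shows "hit_set ((I - {i}) <+> J) (case_sum A B) (Inr j) \<delta> = {} \<or>
    hit_set ((I - {i}) <+> J) (case_sum A B) (Inr j) \<delta> = B j"
proof (cases "\<delta> \<in> diff_group (A i)")
  case True
  then show ?thesis
    using hit_set_refined_Inr_mem_diff_group[OF assms(1,2) True]
      coset_diff_group_minus_mem_iff[OF assms(3)] by auto
next
  case False
  have "B j \<subseteq> A i"
    using assms(1) cover by blast
  then show ?thesis
    using hit_set_refined_Inr_not_mem_diff_group[OF assms(1) False] assms(4) by auto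
qed

end

theorem theorem2p12:
  fixes I :: "'i set" and A :: "'i \<Rightarrow> 'g::{ab_group_add, finite} set"
    and J :: "'j set" and B :: "'j \<Rightarrow> 'g set" and i :: 'i
  assumes "finite I" and "bimodal I A" and "i \<in> I"
    and "is_coset_of (A i) (diff_group (A i))"
    and "finite J"
    and "\<forall>j\<in>J. \<forall>k\<in>J. j \<noteq> k \<longrightarrow> B j \<inter> B k = {}"
    and "(\<Union>j\<in>J. B j) = A i"
    and "\<forall>j\<in>J. is_coset_of (B j) (diff_group (B j))"
  shows "bimodal ((I - {i}) <+> J) (case_sum A B)"
proof -
  have finite_blocks: "\<forall>k\<in>K. finite (C k)" for K and C :: "'x \<Rightarrow> 'g set"
    by simp
  have disjoint_A: "disjoint_family_on A I"
    and bimodal_A: "\<And>k \<delta>. k \<in> I \<Longrightarrow> \<delta> \<noteq> 0 \<Longrightarrow> hit_set I A k \<delta> = {} \<or> hit_set I A k \<delta> = A k"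
    using assms(2) unfolding bimodal_iff_hit_set[OF finite_blocks] by blast+
  have disjoint_B: "disjoint_family_on B J"
    using assms(6) unfolding disjoint_family_on_def by blast
  note refined = disjoint_A assms(3) disjoint_B assms(7)
  have "hit_set ((I - {i}) <+> J) (case_sum A B) x \<delta> = {} \<or>
      hit_set ((I - {i}) <+> J) (case_sum A B) x \<delta> = case_sum A B x"
    if "x \<in> (I - {i}) <+> J" and "\<delta> \<noteq> 0" for x \<delta>
    using that(1)
  proof (elim PlusE)
    fix k assume "k \<in> I - {i}" and "x = Inl k"
    then show ?thesis
      using bimodal_A[OF _ that(2), of k] hit_set_refined_Inl[OF refined, of k \<delta>] by simp
  next
    fix j assume "j \<in> J" and "x = Inr j"
    then show ?thesis
      using hit_set_refined_Inr_empty_or_all[OF refined \<open>j \<in> J\<close> assms(4)] assms(8)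
        bimodal_A[OF assms(3) that(2)] by simp
  qed
  then show ?thesis
    unfolding bimodal_iff_hit_set[OF finite_blocks] using disjoint_family_on_refined[OF refined] by blast
qed

end
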